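(* Let $n\ge 3$. The center of $U_n$ is $$Z(U_n)=\{(x_1+f(x_2,\dots,x_n),\,x_2,\dots,x_n)\mid f\in K\langle x_2,\dots,x_n\rangle,\ f(x_2+g_2,\dots,x_n+g_n)=f(x_2,\dots,x_n)\text{ for all } g_i\in K\langle x_{i+1},\dots,x_n\rangle\ (2\le i\le n-1),\ g_n\in K\}.$$
   Context: $K$ is a field of characteristic zero and $A_n=K\langle x_1,\dots,x_n\rangle$ is the free associative $K$-algebra with unity. $U_n$ is the group of unitriangular automorphisms of $A_n$: all $K$-automorphisms $(x_1+f_1,\dots,x_n+f_n)$, meaning $x_i\mapsto x_i+f_i$, with $f_i\in K\langle x_{i+1},\dots,x_n\rangle$ for $i<n$ and $f_n\in K$. *)

theory Defs
  imports Main
begin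

text \<open>Noncommutative polynomials (elements of the free associative algebra)
  over a field 'k, in variables x_i indexed by natural numbers, represented as
  coefficient functions on words (lists of variable indices) with finite support.\<close>

type_synonym 'k fpoly = "nat list \<Rightarrow> 'k"

definition supp :: "'k::zero fpoly \<Rightarrow> nat list set" where
  "supp p = {w. p w \<noteq> 0}"

definition in_vars :: "nat set \<Rightarrow> 'k::zero fpoly \<Rightarrow> bool" where
  "in_vars S p \<longleftrightarrow> finite (supp p) \<and> (\<forall>w \<in> supp p. set w \<subseteq> S)"

definition pvar :: "nat \<Rightarrow> 'k::{zero,one} fpoly" where
  "pvar i = (\<lambda>w. if w = [i] then 1 else 0)"

definition pone :: "'k::{zero,one} fpoly" where
  "pone = (\<lambda>w. if w = [] then 1 else 0)"

definition padd :: "'k::plus fpoly \<Rightarrow> 'k fpoly \<Rightarrow> 'k fpoly" where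
  "padd p q = (\<lambda>w. p w + q w)"

definition pmul :: "'k::comm_semiring_1 fpoly \<Rightarrow> 'k fpoly \<Rightarrow> 'k fpoly" where
  "pmul p q = (\<lambda>w. \<Sum>i\<le>length w. p (take i w) * q (drop i w))"

text \<open>Substitution x_i := phi i (the endomorphism determined by images of generators).\<close>
definition word_eval :: "(nat \<Rightarrow> 'k::comm_semiring_1 fpoly) \<Rightarrow> nat list \<Rightarrow> 'k fpoly" where
  "word_eval \<phi> w = foldr (\<lambda>i acc. pmul (\<phi> i) acc) w pone"

definition subst :: "(nat \<Rightarrow> 'k::comm_semiring_1 fpoly) \<Rightarrow> 'k fpoly \<Rightarrow> 'k fpoly" where
  "subst \<phi> p = (\<lambda>v. \<Sum>w\<in>supp p. p w * word_eval \<phi> w v)"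

text \<open>Composition of endomorphisms: (comp phi psi) corresponds to subst phi o subst psi.\<close>
definition comp_end :: "(nat \<Rightarrow> 'k::comm_semiring_1 fpoly) \<Rightarrow> (nat \<Rightarrow> 'k fpoly) \<Rightarrow> (nat \<Rightarrow> 'k fpoly)" where
  "comp_end \<phi> \<psi> = (\<lambda>i. subst \<phi> (\<psi> i))"

definition A :: "nat \<Rightarrow> 'k::zero fpoly set" where
  "A n = {p. in_vars {1..n} p}"

text \<open>U_n: unitriangular automorphisms (x_1+f_1,...,x_n+f_n), f_i in K<x_{i+1},...,x_n>,
  f_n in K; encoded by the images of the generators (and x_i fixed for i outside 1..n).\<close>
definition U :: "nat \<Rightarrow> (nat \<Rightarrow> 'k::field fpoly) set" where
  "U n = {\<phi>. (\<forall>i. i \<notin> {1..n} \<longrightarrow> \<phi> i = pvar i)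
            \<and> (\<forall>i\<in>{1..n}. \<exists>f. in_vars {i+1..n} f \<and> \<phi> i = padd (pvar i) f)
            \<and> bij_betw (subst \<phi>) (A n) (A n)}"

definition center_U :: "nat \<Rightarrow> (nat \<Rightarrow> 'k::field fpoly) set" where
  "center_U n = {\<phi> \<in> U n. \<forall>\<psi> \<in> U n. comp_end \<phi> \<psi> = comp_end \<psi> \<phi>}"

end

theory Submission imports Defs "HOL-Library.Poly_Mapping" begin

(* To reason
   algebraically we transfer them to Poly_Mapping: with lists made a monoid under
   concatenation, nat list \<Rightarrow>\<^sub>0 'k is the free algebra, and substitution becomes a
   ring endomorphism; hence substitutions compose (subst_comp).

   The key observation (elem_commute_at) is that elem i f commutes with an
   automorphism \<psi> on x_i, where \<psi> x_i = x_i + h with h free of x_i, iff \<psi> fixes f.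
   Applied three times it gives the theorem:
   - a central \<phi> commutes with elem 1 x_j, so \<phi> fixes x_j for j \<ge> 2: \<phi> = elem 1 f;
   - elem 1 f commutes with Tri n 2 g, so f is invariant under all such g;
   - conversely, for invariant f, elem 1 f commutes with every \<psi> \<in> U_n, since \<psi> acts on
     f as the triangular automorphism of its tails, and \<psi> x_i (i \<noteq> 1) avoids x_1. *)

instantiation list :: (type) monoid_add
begin
definition zero_list_def: "0 = []"
definition plus_list_def: "(+) = (@)"
instance by standard (auto simp: zero_list_def plus_list_def)
end

type_synonym 'k pm = "nat list \<Rightarrow>\<^sub>0 'k"

abbreviation fsupp :: "'k::zero fpoly \<Rightarrow> bool" where "fsupp p \<equiv> finite (supp p)"

definition pm_of :: "'k::zero fpoly \<Rightarrow> 'k pm" where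
  "pm_of p = Abs_poly_mapping p"

lemma lookup_pm_of: "fsupp p \<Longrightarrow> Poly_Mapping.lookup (pm_of p) = p"
  unfolding pm_of_def supp_def by simp

lemma pm_of_lookup [simp]: "pm_of (Poly_Mapping.lookup x) = x"
  unfolding pm_of_def by (simp add: lookup_inverse)

lemma fsupp_lookup [simp]: "fsupp (Poly_Mapping.lookup x)"
  unfolding supp_def by simp

lemma keys_pm_of: "fsupp p \<Longrightarrow> Poly_Mapping.keys (pm_of p) = supp p"
  unfolding keys.rep_eq supp_def by (simp add: lookup_pm_of supp_def)

lemma splits_img: "(\<lambda>i. (take i w, drop i w)) ` {..length w} = {(a,b). a @ b = w}"
proof (rule set_eqI, rule iffI)
  fix x assume "x \<in> {(a,b). a @ b = w}"
  then obtain a b where x: "x = (a,b)" "a @ b = w" by auto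
  then show "x \<in> (\<lambda>i. (take i w, drop i w)) ` {..length w}"
    by (intro image_eqI[where x="length a"]) auto
qed auto

lemma pmul_splits: "pmul p q w = (\<Sum>(a,b)\<in>{(a,b). a @ b = w}. p a * q b)"
proof -
  have "inj_on (\<lambda>i. (take i w, drop i w)) {..length w}"
    by (rule inj_onI) (metis atMost_iff length_take min.absorb2 prod.inject)
  then show ?thesis unfolding pmul_def
    by (subst splits_img[symmetric], subst sum.reindex) simp_all
qed

lemma finite_splits: "finite {(a,b). a @ b = (w::nat list)}"
  by (subst splits_img[symmetric]) simp

lemma pmul_eq_times:
  fixes p q :: "'k::comm_semiring_1 fpoly"
  assumes "fsupp p" "fsupp q"
  shows "pmul p q = Poly_Mapping.lookup (pm_of p * pm_of q)"
proof
  fix w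
  have fin: "finite {a. p a \<noteq> 0}" "finite {b. q b \<noteq> 0}" using assms unfolding supp_def by auto
  have "Poly_Mapping.lookup (pm_of p * pm_of q) w = prod_fun p q w"
    by (simp add: times_poly_mapping.rep_eq lookup_pm_of assms)
  also have "\<dots> = (\<Sum>(a, b). p a * q b when w = a + b)"
    by (rule prod_fun_unfold_prod[OF fin])
  also have "\<dots> = (\<Sum>(a,b)\<in>{(a,b). a @ b = w}. p a * q b when w = a + b)"
    by (rule Sum_any.expand_superset[OF finite_splits])
       (auto simp: plus_list_def when_def split: if_splits)
  also have "\<dots> = pmul p q w" unfolding pmul_splits
    by (rule sum.cong) (auto simp: plus_list_def)
  finally show "pmul p q w = Poly_Mapping.lookup (pm_of p * pm_of q) w" ..
qed

lemma pone_eq_one: "pone = Poly_Mapping.lookup (1 :: 'k::comm_semiring_1 pm)"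
  by (auto simp: pone_def lookup_one zero_list_def when_def)

definition pm_const :: "'k::comm_ring_1 \<Rightarrow> 'k pm" where
  "pm_const c = Poly_Mapping.single 0 c"

lemma lookup_pm_const_mult: "Poly_Mapping.lookup (pm_const c * x) v = c * Poly_Mapping.lookup x v"
  unfolding pm_const_def mult_map_scale_conv_mult[symmetric]
  by (simp add: map.rep_eq when_def)

lemma pm_expand: "x = (\<Sum>a\<in>Poly_Mapping.keys x. Poly_Mapping.single a (Poly_Mapping.lookup x a))"
  by (rule poly_mapping_eqI) (simp add: lookup_sum lookup_single when_def in_keys_iff)

lemma pm_const_commute: "pm_const c * x = x * (pm_const c :: 'k::comm_ring_1 pm)"
proof -
  have "pm_const c * x =
      (\<Sum>a\<in>Poly_Mapping.keys x. pm_const c * Poly_Mapping.single a (Poly_Mapping.lookup x a))"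
    by (subst pm_expand[of x]) (simp add: sum_distrib_left)
  also have "\<dots> = (\<Sum>a\<in>Poly_Mapping.keys x. Poly_Mapping.single a (Poly_Mapping.lookup x a) * pm_const c)"
    by (rule sum.cong) (simp_all add: pm_const_def mult_single mult.commute)
  also have "\<dots> = x * pm_const c"
    by (subst (2) pm_expand[of x]) (simp add: sum_distrib_right)
  finally show ?thesis .
qed

lemma pm_const_mult: "pm_const (a * b) = pm_const a * pm_const b"
  by (simp add: pm_const_def mult_single)

lemma pm_const_0 [simp]: "pm_const 0 = 0" by (simp add: pm_const_def)
lemma pm_const_1 [simp]: "pm_const 1 = 1" by (simp add: pm_const_def)

lemma pm_const_add: "pm_const (a + b) = pm_const a + pm_const b"
  by (simp add: pm_const_def single_add)

definition pm_word :: "(nat \<Rightarrow> 'k::comm_ring_1 pm) \<Rightarrow> nat list \<Rightarrow> 'k pm" where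
  "pm_word \<Phi> w = foldr (\<lambda>i acc. \<Phi> i * acc) w 1"

lemma pm_word_Nil [simp]: "pm_word \<Phi> [] = 1" by (simp add: pm_word_def)
lemma pm_word_Cons [simp]: "pm_word \<Phi> (i # w) = \<Phi> i * pm_word \<Phi> w" by (simp add: pm_word_def)
lemma pm_word_append: "pm_word \<Phi> (u @ v) = pm_word \<Phi> u * pm_word \<Phi> v"
  by (induct u) (simp_all add: mult.assoc)

definition pm_subst :: "(nat \<Rightarrow> 'k::comm_ring_1 pm) \<Rightarrow> 'k pm \<Rightarrow> 'k pm" where
  "pm_subst \<Phi> x = (\<Sum>w\<in>Poly_Mapping.keys x. pm_const (Poly_Mapping.lookup x w) * pm_word \<Phi> w)"

lemma pm_subst_superset:
  "finite B \<Longrightarrow> Poly_Mapping.keys x \<subseteq> B \<Longrightarrow>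
   pm_subst \<Phi> x = (\<Sum>w\<in>B. pm_const (Poly_Mapping.lookup x w) * pm_word \<Phi> w)"
  unfolding pm_subst_def by (rule sum.mono_neutral_left) (auto simp: in_keys_iff)

lemma pm_subst_add: "pm_subst \<Phi> (x + y) = pm_subst \<Phi> x + pm_subst \<Phi> y"
proof -
  let ?B = "Poly_Mapping.keys x \<union> Poly_Mapping.keys y"
  have "pm_subst \<Phi> (x + y) = (\<Sum>w\<in>?B. pm_const (Poly_Mapping.lookup (x+y) w) * pm_word \<Phi> w)"
    by (rule pm_subst_superset) (auto simp: keys_add)
  also have "\<dots> = (\<Sum>w\<in>?B. pm_const (Poly_Mapping.lookup x w) * pm_word \<Phi> w)
                 + (\<Sum>w\<in>?B. pm_const (Poly_Mapping.lookup y w) * pm_word \<Phi> w)"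
    by (simp add: lookup_add pm_const_add distrib_right sum.distrib)
  also have "\<dots> = pm_subst \<Phi> x + pm_subst \<Phi> y"
    by (simp add: pm_subst_superset[symmetric])
  finally show ?thesis .
qed

lemma pm_subst_zero [simp]: "pm_subst \<Phi> 0 = 0" by (simp add: pm_subst_def)

lemma pm_subst_sum: "pm_subst \<Phi> (sum f I) = (\<Sum>i\<in>I. pm_subst \<Phi> (f i))"
  by (induct I rule: infinite_finite_induct) (simp_all add: pm_subst_add)

lemma pm_subst_single: "pm_subst \<Phi> (Poly_Mapping.single w c) = pm_const c * pm_word \<Phi> w"
  by (simp add: pm_subst_def pm_const_def)

lemma pm_subst_mult: "pm_subst \<Phi> (x * y) = pm_subst \<Phi> x * pm_subst \<Phi> y"
proof -
  have xy: "x * y = (\<Sum>a\<in>Poly_Mapping.keys x. \<Sum>b\<in>Poly_Mapping.keys y.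
      Poly_Mapping.single (a @ b) (Poly_Mapping.lookup x a * Poly_Mapping.lookup y b))"
    by (subst pm_expand[of x], subst pm_expand[of y])
       (simp add: sum_distrib_left sum_distrib_right mult_single plus_list_def, rule sum.swap)
  have "pm_subst \<Phi> (x * y) = (\<Sum>a\<in>Poly_Mapping.keys x. \<Sum>b\<in>Poly_Mapping.keys y.
      pm_const (Poly_Mapping.lookup x a) * pm_word \<Phi> a *
      (pm_const (Poly_Mapping.lookup y b) * pm_word \<Phi> b))"
    unfolding xy pm_subst_sum pm_subst_single
    by (intro sum.cong refl)
       (simp add: pm_const_mult pm_word_append mult.assoc, metis (no_types) mult.assoc pm_const_commute)
  also have "\<dots> = pm_subst \<Phi> x * pm_subst \<Phi> y"
    by (simp add: pm_subst_def sum_distrib_left sum_distrib_right) (rule sum.swap)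
  finally show ?thesis .
qed

lemma pm_subst_const [simp]: "pm_subst \<Phi> (pm_const c) = pm_const c"
  by (metis pm_subst_single pm_word_Nil mult_1_right pm_const_def zero_list_def)

lemma pm_subst_one [simp]: "pm_subst \<Phi> 1 = 1"
  by (metis pm_subst_const pm_const_def single_one zero_list_def)

lemma pm_subst_word: "pm_subst \<Phi> (pm_word \<Psi> w) = pm_word (\<lambda>i. pm_subst \<Phi> (\<Psi> i)) w"
  by (induct w) (simp_all add: pm_subst_mult)

lemma pm_subst_comp: "pm_subst \<Phi> (pm_subst \<Psi> x) = pm_subst (\<lambda>i. pm_subst \<Phi> (\<Psi> i)) x"
  unfolding pm_subst_def[of \<Psi> x] pm_subst_sum pm_subst_mult pm_subst_const pm_subst_word
  by (simp add: pm_subst_def[of "\<lambda>i. pm_subst \<Phi> (\<Psi> i)" x])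

lemma word_eval_pm_word:
  "(\<And>i. fsupp (\<phi> i)) \<Longrightarrow> word_eval \<phi> w = Poly_Mapping.lookup (pm_word (\<lambda>i. pm_of (\<phi> i)) w)"
proof (induct w)
  case Nil then show ?case by (simp add: word_eval_def pone_eq_one)
next
  case (Cons i w)
  have "word_eval \<phi> (i # w) = pmul (\<phi> i) (word_eval \<phi> w)" by (simp add: word_eval_def)
  also have "\<dots> = Poly_Mapping.lookup (pm_of (\<phi> i) * pm_word (\<lambda>i. pm_of (\<phi> i)) w)"
    using Cons by (simp add: pmul_eq_times)
  finally show ?case by simp
qed

lemma subst_pm_subst:
  "fsupp p \<Longrightarrow> (\<And>i. fsupp (\<phi> i)) \<Longrightarrow>
   subst \<phi> p = Poly_Mapping.lookup (pm_subst (\<lambda>i. pm_of (\<phi> i)) (pm_of p))"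
  by (rule ext)
     (simp add: subst_def pm_subst_def keys_pm_of lookup_sum lookup_pm_const_mult lookup_pm_of
       word_eval_pm_word)

lemma fsupp_subst:
  fixes p :: "'k::comm_ring_1 fpoly"
  assumes "fsupp p" "\<And>i. fsupp (\<phi> i)" shows "fsupp (subst \<phi> p)"
  by (simp add: subst_pm_subst[OF assms])

lemma fsupp_comp_end:
  fixes \<phi> \<psi> :: "nat \<Rightarrow> 'k::comm_ring_1 fpoly"
  assumes "\<And>i. fsupp (\<phi> i)" "\<And>i. fsupp (\<psi> i)" shows "fsupp (comp_end \<phi> \<psi> i)"
  by (simp add: comp_end_def fsupp_subst assms)

lemma subst_comp:
  fixes p :: "'k::comm_ring_1 fpoly"
  assumes "fsupp p" "\<And>i. fsupp (\<phi> i)" "\<And>i. fsupp (\<psi> i)"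
  shows "subst \<phi> (subst \<psi> p) = subst (comp_end \<phi> \<psi>) p"
proof -
  have "pm_of (comp_end \<phi> \<psi> i) = pm_subst (\<lambda>i. pm_of (\<phi> i)) (pm_of (\<psi> i))" for i
    by (simp add: comp_end_def subst_pm_subst assms)
  then show ?thesis using assms
    by (simp add: subst_pm_subst fsupp_subst fsupp_comp_end pm_subst_comp)
qed

definition pzero :: "'k::comm_ring_1 fpoly" where "pzero = (\<lambda>w. 0)"

definition pneg :: "'k::comm_ring_1 fpoly \<Rightarrow> 'k fpoly" where
  "pneg p = (\<lambda>w. - p w)"

lemma supp_pvar [simp]: "supp (pvar i :: 'k::comm_ring_1 fpoly) = {[i]}"
  by (auto simp: supp_def pvar_def)

lemma supp_padd: "supp (padd p q :: 'k::comm_ring_1 fpoly) \<subseteq> supp p \<union> supp q"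
  by (auto simp: supp_def padd_def)

lemma fsupp_padd: "fsupp p \<Longrightarrow> fsupp q \<Longrightarrow> fsupp (padd p q :: 'k::comm_ring_1 fpoly)"
  by (meson finite_Un finite_subset supp_padd)

lemma padd_pzero [simp]: "padd p pzero = p" by (simp add: padd_def pzero_def)

lemma in_vars_fsupp: "in_vars T p \<Longrightarrow> fsupp p" by (simp add: in_vars_def)

lemma in_vars_mono: "in_vars T p \<Longrightarrow> T \<subseteq> T' \<Longrightarrow> in_vars T' p"
  by (auto simp: in_vars_def)

lemma in_vars_padd: "in_vars T p \<Longrightarrow> in_vars T q \<Longrightarrow> in_vars T (padd p q :: 'k::comm_ring_1 fpoly)"
  unfolding in_vars_def using supp_padd fsupp_padd by blast

lemma in_vars_pvar: "i \<in> T \<Longrightarrow> in_vars T (pvar i :: 'k::comm_ring_1 fpoly)"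
  by (simp add: in_vars_def)

lemma in_vars_pneg: "in_vars T (pneg p) = in_vars T p"
  by (simp add: in_vars_def supp_def pneg_def)

lemma in_vars_pzero: "in_vars T pzero"
  by (simp add: in_vars_def supp_def pzero_def)

lemma in_vars_padd_pvar:
  "in_vars T g \<Longrightarrow> i \<in> T' \<Longrightarrow> T \<subseteq> T' \<Longrightarrow> in_vars T' (padd (pvar i) g :: 'k::comm_ring_1 fpoly)"
  by (auto intro!: in_vars_padd in_vars_pvar elim: in_vars_mono)

lemma pm_of_padd:
  assumes "fsupp p" "fsupp q"
  shows "pm_of (padd p q :: 'k::comm_ring_1 fpoly) = pm_of p + pm_of q"
  by (rule poly_mapping_eqI)
     (simp add: lookup_add lookup_pm_of fsupp_padd assms, simp add: padd_def)

lemma fsupp_pvar [simp]: "fsupp (pvar i :: 'k::comm_ring_1 fpoly)" by simp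

lemma pm_of_pvar: "pm_of (pvar i :: 'k::comm_ring_1 fpoly) = Poly_Mapping.single [i] 1"
  by (rule poly_mapping_eqI)
     (simp add: lookup_pm_of[OF fsupp_pvar], simp add: lookup_single when_def pvar_def)

lemma subst_padd:
  fixes p q :: "'k::comm_ring_1 fpoly"
  assumes p: "fsupp p" and q: "fsupp q" and fin: "\<And>i. fsupp (\<phi> i)"
  shows "subst \<phi> (padd p q) = padd (subst \<phi> p) (subst \<phi> q)"
  unfolding subst_pm_subst[OF fsupp_padd[OF p q] fin] subst_pm_subst[OF p fin]
    subst_pm_subst[OF q fin] pm_of_padd[OF p q] pm_subst_add
  by (simp add: lookup_add padd_def fun_eq_iff)

lemma subst_pvar:
  assumes "\<And>i. fsupp (\<phi> i)"
  shows "subst \<phi> (pvar i :: 'k::comm_ring_1 fpoly) = \<phi> i"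
  using assms by (simp add: subst_pm_subst pm_of_pvar pm_subst_single lookup_pm_of)

lemma subst_cong:
  assumes "in_vars T p" "\<And>i. i \<in> T \<Longrightarrow> \<phi> i = \<phi>' i"
  shows "subst \<phi> p = subst \<phi>' p"
proof -
  have "word_eval \<phi> w = word_eval \<phi>' w" if "w \<in> supp p" for w
  proof -
    have "set w \<subseteq> T" using that assms(1) by (auto simp: in_vars_def)
    then show ?thesis unfolding word_eval_def
      by (intro foldr_cong) (metis assms(2) subsetD)+
  qed
  then show ?thesis unfolding subst_def by (simp cong: sum.cong)
qed

lemma pm_word_pvars:
  "(\<And>i. i \<in> set w \<Longrightarrow> \<Phi> i = Poly_Mapping.single [i] 1) \<Longrightarrow>
   pm_word \<Phi> w = Poly_Mapping.single w (1::'k::comm_ring_1)"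
proof (induct w)
  case Nil then show ?case by (metis pm_word_Nil single_one zero_list_def)
next
  case (Cons a w) then show ?case by (simp add: mult_single plus_list_def)
qed

lemma subst_fix:
  fixes p :: "'k::comm_ring_1 fpoly"
  assumes p: "in_vars T p" and fin: "\<And>i. fsupp (\<phi> i)" and fixed: "\<And>i. i \<in> T \<Longrightarrow> \<phi> i = pvar i"
  shows "subst \<phi> p = p"
proof -
  have fp: "fsupp p" using p by (rule in_vars_fsupp)
  have "pm_subst (\<lambda>i. pm_of (\<phi> i)) (pm_of p) =
      (\<Sum>a\<in>Poly_Mapping.keys (pm_of p). Poly_Mapping.single a (Poly_Mapping.lookup (pm_of p) a))"
    unfolding pm_subst_def
  proof (rule sum.cong[OF refl])
    fix w assume w: "w \<in> Poly_Mapping.keys (pm_of p)"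
    have "set w \<subseteq> T" using w p by (auto simp: keys_pm_of[OF fp] in_vars_def)
    then have "pm_word (\<lambda>i. pm_of (\<phi> i)) w = Poly_Mapping.single w 1"
      by (intro pm_word_pvars) (metis fixed pm_of_pvar subsetD)
    then show "pm_const (Poly_Mapping.lookup (pm_of p) w) * pm_word (\<lambda>i. pm_of (\<phi> i)) w =
        Poly_Mapping.single w (Poly_Mapping.lookup (pm_of p) w)"
      by (simp add: pm_const_def mult_single plus_list_def zero_list_def)
  qed
  also have "\<dots> = pm_of p" by (rule pm_expand[symmetric])
  finally show ?thesis by (simp add: subst_pm_subst[OF fp fin] lookup_pm_of[OF fp])
qed

definition words_over :: "nat set \<Rightarrow> nat list set" where "words_over T = {w. set w \<subseteq> T}"

lemma keys_mult_words_over: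
  assumes "Poly_Mapping.keys x \<subseteq> words_over T" "Poly_Mapping.keys y \<subseteq> words_over T"
  shows "Poly_Mapping.keys (x * y) \<subseteq> words_over T"
proof
  fix w assume "w \<in> Poly_Mapping.keys (x * y)"
  then obtain a b where "w = a @ b" "a \<in> Poly_Mapping.keys x" "b \<in> Poly_Mapping.keys y"
    using keys_mult[of x y] by (auto simp: plus_list_def)
  then show "w \<in> words_over T" using assms by (auto simp: words_over_def)
qed

lemma keys_pm_word:
  "(\<And>i. i \<in> set w \<Longrightarrow> Poly_Mapping.keys (\<Phi> i) \<subseteq> words_over T) \<Longrightarrow>
   Poly_Mapping.keys (pm_word \<Phi> w) \<subseteq> words_over T"
proof (induct w)
  case Nil then show ?case by (simp add: words_over_def zero_list_def)
next
  case (Cons a w) then show ?case by (simp add: keys_mult_words_over)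
qed

lemma in_vars_iff_keys: "in_vars T p \<longleftrightarrow> fsupp p \<and> Poly_Mapping.keys (pm_of p) \<subseteq> words_over T"
  by (auto simp: in_vars_def keys_pm_of words_over_def)

lemma in_vars_subst:
  fixes p :: "'k::comm_ring_1 fpoly"
  assumes p: "in_vars T p" and fin: "\<And>i. fsupp (\<phi> i)" and img: "\<And>i. i \<in> T \<Longrightarrow> in_vars T' (\<phi> i)"
  shows "in_vars T' (subst \<phi> p)"
proof -
  have fp: "fsupp p" using p by (rule in_vars_fsupp)
  have "Poly_Mapping.keys (pm_subst (\<lambda>i. pm_of (\<phi> i)) (pm_of p)) \<subseteq> words_over T'"
    unfolding pm_subst_def
  proof (rule order_trans[OF keys_sum], rule UN_least)
    fix w assume w: "w \<in> Poly_Mapping.keys (pm_of p)"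
    then have "set w \<subseteq> T" using p by (auto simp: in_vars_def keys_pm_of[OF fp])
    then show "Poly_Mapping.keys (pm_const (Poly_Mapping.lookup (pm_of p) w)
                 * pm_word (\<lambda>i. pm_of (\<phi> i)) w) \<subseteq> words_over T'"
      using img by (intro keys_mult_words_over keys_pm_word)
                   (auto simp: in_vars_iff_keys pm_const_def words_over_def zero_list_def)
  qed
  then show ?thesis using fp fin by (simp add: in_vars_iff_keys subst_pm_subst fsupp_subst)
qed

lemma subst_A:
  fixes \<phi> :: "nat \<Rightarrow> 'k::comm_ring_1 fpoly"
  assumes "\<And>i. fsupp (\<phi> i)" "\<And>i. i \<in> {1..n} \<Longrightarrow> in_vars {1..n} (\<phi> i)" "p \<in> A n"
  shows "subst \<phi> p \<in> A n"
  using in_vars_subst[of "{1..n}" p \<phi> "{1..n}"] assms by (simp add: A_def)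

lemma bij_of_inverse:
  fixes \<phi> \<phi>' :: "nat \<Rightarrow> 'k::comm_ring_1 fpoly"
  assumes fin: "\<And>i. fsupp (\<phi> i)" "\<And>i. fsupp (\<phi>' i)"
    and img: "\<And>i. i \<in> {1..n} \<Longrightarrow> in_vars {1..n} (\<phi> i)" "\<And>i. i \<in> {1..n} \<Longrightarrow> in_vars {1..n} (\<phi>' i)"
    and inv: "\<And>i. i \<in> {1..n} \<Longrightarrow> comp_end \<phi> \<phi>' i = pvar i"
             "\<And>i. i \<in> {1..n} \<Longrightarrow> comp_end \<phi>' \<phi> i = pvar i"
  shows "bij_betw (subst \<phi>) (A n) (A n)"
proof (rule bij_betw_byWitness[where f'="subst \<phi>'"])
  have cancel: "subst \<alpha> (subst \<beta> p) = p"
    if p: "p \<in> A n" and fa: "\<And>i. fsupp (\<alpha> i)" and fb: "\<And>i. fsupp (\<beta> i)"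
      and ab: "\<And>i. i \<in> {1..n} \<Longrightarrow> comp_end \<alpha> \<beta> i = pvar i" for \<alpha> \<beta> :: "nat \<Rightarrow> 'k fpoly" and p
  proof -
    have pv: "in_vars {1..n} p" using p by (simp add: A_def)
    have "subst \<alpha> (subst \<beta> p) = subst (comp_end \<alpha> \<beta>) p"
      by (rule subst_comp[OF in_vars_fsupp[OF pv] fa fb])
    also have "\<dots> = p" by (rule subst_fix[OF pv fsupp_comp_end[OF fa fb] ab])
    finally show ?thesis .
  qed
  show "\<forall>p\<in>A n. subst \<phi>' (subst \<phi> p) = p" "\<forall>p\<in>A n. subst \<phi> (subst \<phi>' p) = p"
    using cancel fin inv by blast+
  show "subst \<phi> ` A n \<subseteq> A n" "subst \<phi>' ` A n \<subseteq> A n"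
    using subst_A fin img by blast+
qed

lemma bij_comp_end:
  fixes \<phi> \<psi> :: "nat \<Rightarrow> 'k::comm_ring_1 fpoly"
  assumes "\<And>i. fsupp (\<phi> i)" "\<And>i. fsupp (\<psi> i)"
    and "bij_betw (subst \<phi>) (A n) (A n)" "bij_betw (subst \<psi>) (A n) (A n)"
  shows "bij_betw (subst (comp_end \<phi> \<psi>)) (A n) (A n)"
proof -
  have "bij_betw (subst \<phi> \<circ> subst \<psi>) (A n) (A n)" using bij_betw_trans[OF assms(4,3)] .
  moreover have "(subst \<phi> \<circ> subst \<psi>) p = subst (comp_end \<phi> \<psi>) p" if "p \<in> A n" for p
    using that assms(1,2) by (simp add: A_def in_vars_def subst_comp)
  ultimately show ?thesis using bij_betw_cong by metis
qed

definition elem :: "nat \<Rightarrow> 'k::comm_ring_1 fpoly \<Rightarrow> nat \<Rightarrow> 'k fpoly" where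
  "elem i g = (\<lambda>j. if j = i then padd (pvar i) g else pvar j)"

lemma elem_same [simp]: "elem i g i = padd (pvar i) g" by (simp add: elem_def)
lemma elem_other [simp]: "j \<noteq> i \<Longrightarrow> elem i g j = pvar j" by (simp add: elem_def)

lemma fsupp_elem: "fsupp g \<Longrightarrow> fsupp (elem i g j)"
  by (simp add: elem_def fsupp_padd)

lemma subst_elem_shift:
  fixes g h :: "'k::comm_ring_1 fpoly"
  assumes g: "fsupp g" and h: "in_vars T h" and i: "i \<notin> T"
  shows "subst (elem i g) (padd (pvar i) h) = padd (padd (pvar i) g) h"
proof -
  have fin: "\<And>j. fsupp (elem i g j)" using fsupp_elem[OF g] .
  have "subst (elem i g) h = h"
    by (rule subst_fix[OF h fin]) (metis elem_other i)
  then show ?thesis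
    by (simp add: subst_padd[OF fsupp_pvar in_vars_fsupp[OF h] fin] subst_pvar[OF fin])
qed

lemma elem_bij:
  fixes g :: "'k::comm_ring_1 fpoly"
  assumes i: "i \<in> {1..n}" and g: "in_vars T g" and iT: "i \<notin> T" and Tn: "T \<subseteq> {1..n}"
  shows "bij_betw (subst (elem i g)) (A n) (A n)"
proof -
  have gn: "in_vars T (pneg g)" by (simp add: in_vars_pneg g)
  have fin: "fsupp (elem i h j)" if "in_vars T h" for h j
    using that by (simp add: fsupp_elem in_vars_fsupp)
  have inverse: "comp_end (elem i h) (elem i h') j = pvar j"
    if h: "in_vars T h" and h': "in_vars T h'" and hh': "padd h h' = pzero" for h h' j
  proof (cases "j = i")
    case True
    have "subst (elem i h) (padd (pvar i) h') = padd (padd (pvar i) h) h'"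
      by (rule subst_elem_shift[OF in_vars_fsupp[OF h] h' iT])
    also have "\<dots> = pvar i" using fun_cong[OF hh'] by (simp add: padd_def pzero_def add.assoc)
    finally show ?thesis using True by (simp add: comp_end_def)
  next
    case False then show ?thesis by (simp add: comp_end_def subst_pvar fin[OF h])
  qed
  have img: "in_vars {1..n} (elem i h j)" if "in_vars T h" "j \<in> {1..n}" for h j
    using that i Tn by (cases "j = i") (auto intro: in_vars_padd_pvar in_vars_pvar)
  show ?thesis
    by (rule bij_of_inverse[where \<phi>'="elem i (pneg g)"])
       (use fin[OF g] fin[OF gn] img[OF g] img[OF gn] inverse[OF g gn] inverse[OF gn g]
        in \<open>auto simp: padd_def pneg_def pzero_def fun_eq_iff\<close>)
qed

definition triangular :: "nat \<Rightarrow> nat \<Rightarrow> (nat \<Rightarrow> 'k::zero fpoly) \<Rightarrow> bool" where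
  "triangular n k g \<longleftrightarrow> (\<forall>j\<in>{k..n}. in_vars {j+1..n} (g j))"

definition Tri :: "nat \<Rightarrow> nat \<Rightarrow> (nat \<Rightarrow> 'k::comm_ring_1 fpoly) \<Rightarrow> nat \<Rightarrow> 'k fpoly" where
  "Tri n k g = (\<lambda>i. if i \<in> {k..n} then padd (pvar i) (g i) else pvar i)"

lemma fsupp_Tri: "triangular n k g \<Longrightarrow> fsupp (Tri n k g i)"
  by (auto simp: Tri_def triangular_def in_vars_def fsupp_padd)

lemma Tri_step:
  fixes g :: "nat \<Rightarrow> 'k::comm_ring_1 fpoly"
  assumes g: "triangular n k g" and k: "k \<le> n"
  shows "Tri n k g = comp_end (elem k (g k)) (Tri n (Suc k) g)"
proof
  fix i
  have fk: "fsupp (g k)" using g k by (auto simp: triangular_def in_vars_def)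
  show "Tri n k g i = comp_end (elem k (g k)) (Tri n (Suc k) g) i"
  proof (cases "i \<in> {Suc k..n}")
    case True
    then have "in_vars {i..n} (padd (pvar i) (g i))"
      using g by (intro in_vars_padd_pvar[of "{i+1..n}"]) (auto simp: triangular_def)
    then have "subst (elem k (g k)) (padd (pvar i) (g i)) = padd (pvar i) (g i)"
      by (rule subst_fix[OF _ fsupp_elem[OF fk]]) (use True in auto)
    then show ?thesis using True by (simp add: Tri_def comp_end_def)
  next
    case False
    then show ?thesis using k
      by (cases "i = k") (auto simp: Tri_def comp_end_def subst_pvar fsupp_elem fk)
  qed
qed

lemma bij_subst_pvar: "bij_betw (subst pvar) (A n) (A n :: 'k::comm_ring_1 fpoly set)"
proof -
  have "subst pvar p = id p" if "p \<in> A n" for p :: "'k fpoly"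
    using that by (simp add: A_def subst_fix)
  then show ?thesis using bij_betw_cong[of "A n" "subst pvar" id] bij_betw_id by metis
qed

lemma Tri_bij:
  fixes g :: "nat \<Rightarrow> 'k::comm_ring_1 fpoly"
  assumes "1 \<le> k" "triangular n k g"
  shows "bij_betw (subst (Tri n k g)) (A n) (A n)"
proof (cases "k \<le> Suc n")
  case False
  then have "Tri n k g = pvar" by (auto simp: Tri_def)
  then show ?thesis by (simp add: bij_subst_pvar)
next
  case True
  then show ?thesis using assms
  proof (induction k rule: inc_induct)
    case base
    have "Tri n (Suc n) g = pvar" by (auto simp: Tri_def)
    then show ?case by (simp add: bij_subst_pvar)
  next
    case (step k)
    have g: "triangular n (Suc k) g" using step.prems(2) by (auto simp: triangular_def)
    have gk: "in_vars {k+1..n} (g k)" using step.prems(2) step.hyps by (auto simp: triangular_def)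
    have "bij_betw (subst (elem k (g k))) (A n) (A n)"
      by (rule elem_bij[OF _ gk]) (use step in auto)
    then show ?case
      using bij_comp_end[OF fsupp_elem[OF in_vars_fsupp[OF gk]] fsupp_Tri[OF g]]
        step.IH[OF _ g] step.hyps Tri_step[OF step.prems(2)] by simp
  qed
qed

lemma U_fsupp:
  assumes "\<phi> \<in> U n" shows "fsupp (\<phi> i)"
proof (cases "i \<in> {1..n}")
  case True
  then obtain f where "in_vars {i+1..n} f" "\<phi> i = padd (pvar i) f" using assms unfolding U_def by blast
  then show ?thesis by (metis fsupp_padd fsupp_pvar in_vars_fsupp)
next
  case False then show ?thesis using assms unfolding U_def by auto
qed

lemma U_outside: "\<phi> \<in> U n \<Longrightarrow> i \<notin> {1..n} \<Longrightarrow> \<phi> i = pvar i"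
  unfolding U_def by auto

lemma U_tails:
  "\<phi> \<in> U n \<Longrightarrow> \<exists>F. triangular n 1 F \<and> (\<forall>i\<in>{1..n}. \<phi> i = padd (pvar i) (F i))"
  unfolding U_def triangular_def by (auto dest!: bchoice)

lemma U_avoids_x1:
  assumes "\<psi> \<in> U n" "i \<noteq> 1"
  shows "in_vars (-{1}) (\<psi> i)"
proof (cases "i \<in> {1..n}")
  case True
  then obtain F where "in_vars {i+1..n} F" "\<psi> i = padd (pvar i) F"
    using assms(1) unfolding U_def by blast
  then show ?thesis using True assms(2) by (auto intro: in_vars_padd_pvar)
next
  case False
  then show ?thesis using assms by (simp add: U_outside in_vars_pvar)
qed

lemma Tri_in_U:
  assumes "1 \<le> k" "triangular n k g"
  shows "Tri n k g \<in> U n"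
  unfolding U_def
proof (intro CollectI conjI ballI allI impI)
  fix i assume "i \<notin> {1..n}" then show "Tri n k g i = pvar i" using assms(1) by (auto simp: Tri_def)
next
  fix i
  show "\<exists>f. in_vars {i + 1..n} f \<and> Tri n k g i = padd (pvar i) f"
  proof (cases "i \<in> {k..n}")
    case True then show ?thesis using assms(2) by (auto simp: Tri_def triangular_def)
  next
    case False then show ?thesis by (intro exI[of _ pzero]) (use False in \<open>auto simp: Tri_def in_vars_pzero\<close>)
  qed
next
  show "bij_betw (subst (Tri n k g)) (A n) (A n)" by (rule Tri_bij[OF assms])
qed

lemma elem_in_U:
  assumes i: "i \<in> {1..n}" and g: "in_vars {i+1..n} g"
  shows "elem i g \<in> U n"
proof -
  let ?G = "\<lambda>j. if j = i then g else pzero"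
  have "triangular n i ?G" using g by (simp add: triangular_def in_vars_pzero)
  moreover have "elem i g = Tri n i ?G" using i by (auto simp: elem_def Tri_def fun_eq_iff)
  ultimately show ?thesis using Tri_in_U i by auto
qed

text \<open>Key lemma: if \<psi> x_i = x_i + h with h free of x_i, then elem i f and \<psi> agree on
  x_i exactly when \<psi> fixes f (both sides are x_i + f + h versus x_i + h + \<psi>(f)).\<close>
lemma elem_commute_at:
  fixes f h :: "'k::comm_ring_1 fpoly"
  assumes f: "fsupp f" and h: "in_vars T h" and i: "i \<notin> T"
    and \<psi>i: "\<psi> i = padd (pvar i) h" and fin: "\<And>j. fsupp (\<psi> j)"
  shows "comp_end (elem i f) \<psi> i = comp_end \<psi> (elem i f) i \<longleftrightarrow> subst \<psi> f = f"
proof -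
  have "comp_end (elem i f) \<psi> i = padd (padd (pvar i) f) h"
    by (simp add: comp_end_def \<psi>i subst_elem_shift[OF f h i])
  moreover have "comp_end \<psi> (elem i f) i = padd (padd (pvar i) h) (subst \<psi> f)"
    by (simp add: comp_end_def subst_padd[OF fsupp_pvar f fin] subst_pvar[OF fin] \<psi>i)
  ultimately show ?thesis by (auto simp: padd_def fun_eq_iff algebra_simps)
qed

lemma elem_commute_off:
  fixes f :: "'k::comm_ring_1 fpoly"
  assumes f: "fsupp f" and \<psi>j: "in_vars T (\<psi> j)" and i: "i \<notin> T" and ji: "j \<noteq> i"
    and fin: "\<And>k. fsupp (\<psi> k)"
  shows "comp_end (elem i f) \<psi> j = comp_end \<psi> (elem i f) j"
proof -
  have "subst (elem i f) (\<psi> j) = \<psi> j"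
    by (rule subst_fix[OF \<psi>j fsupp_elem[OF f]]) (metis elem_other i)
  then show ?thesis using ji by (simp add: comp_end_def subst_pvar[OF fin])
qed

text \<open>A central element commutes with each elem 1 x_j (j \<ge> 2), hence fixes x_j:
  it has the form x_1 \<mapsto> x_1 + f.\<close>
lemma central_is_elem:
  fixes \<phi> :: "nat \<Rightarrow> 'k::field fpoly"
  assumes c: "\<phi> \<in> center_U n" and n: "1 \<le> n"
  shows "\<exists>f. in_vars {2..n} f \<and> \<phi> = elem 1 f"
proof -
  have U: "\<phi> \<in> U n" and comm: "\<And>\<psi>. \<psi> \<in> U n \<Longrightarrow> comp_end \<phi> \<psi> = comp_end \<psi> \<phi>"
    using c by (auto simp: center_U_def)
  obtain F where F: "triangular n 1 F" "\<forall>i\<in>{1..n}. \<phi> i = padd (pvar i) (F i)"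
    using U_tails[OF U] by blast
  have F1: "in_vars {2..n} (F 1)" using F(1) n by (auto simp: triangular_def numeral_2_eq_2)
  have \<phi>1: "\<phi> 1 = padd (pvar 1) (F 1)" using F(2) n by auto
  have fixes_j: "\<phi> j = pvar j" if j: "j \<in> {2..n}" for j
  proof -
    have "elem 1 (pvar j) \<in> U n" by (rule elem_in_U) (use j n in \<open>auto intro: in_vars_pvar\<close>)
    then have "comp_end (elem 1 (pvar j)) \<phi> 1 = comp_end \<phi> (elem 1 (pvar j)) 1"
      using comm by metis
    then have "subst \<phi> (pvar j) = pvar j"
      using elem_commute_at[of "pvar j" "{2..n}" "F 1" 1 \<phi>] F1 \<phi>1 U_fsupp[OF U] by simp
    then show ?thesis by (simp add: subst_pvar U_fsupp[OF U])
  qed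
  have "\<phi> = elem 1 (F 1)"
  proof
    fix i show "\<phi> i = elem 1 (F 1) i"
    proof (cases "i \<in> {1..n}")
      case True then show ?thesis using \<phi>1 fixes_j by (cases "i = 1") auto
    next
      case False then show ?thesis using U_outside[OF U False] False n by auto
    qed
  qed
  with F1 show ?thesis by blast
qed

text \<open>A central elem 1 f commutes with the triangular automorphisms on x_2, ..., x_n,
  which therefore fix f.\<close>
lemma central_elem_invariant:
  fixes f :: "'k::field fpoly"
  assumes c: "elem 1 f \<in> center_U n" and f: "in_vars {2..n} f" and g: "triangular n 2 g"
  shows "subst (Tri n 2 g) f = f"
proof -
  have "Tri n 2 g \<in> U n" by (rule Tri_in_U) (simp_all add: g)
  then have "comp_end (elem 1 f) (Tri n 2 g) 1 = comp_end (Tri n 2 g) (elem 1 f) 1"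
    using c by (simp add: center_U_def)
  moreover have "Tri n 2 g 1 = padd (pvar 1) pzero" by (simp add: Tri_def)
  ultimately show ?thesis
    using elem_commute_at[OF in_vars_fsupp[OF f] in_vars_pzero[of "{}"]] fsupp_Tri[OF g] by simp
qed

text \<open>Conversely, if f is invariant then elem 1 f is central: on x_1 because every
  \<psi> \<in> U_n acts on f like the triangular automorphism of its tails, and on the
  other variables because \<psi> x_i does not involve x_1.\<close>
lemma invariant_elem_central:
  fixes f :: "'k::field fpoly"
  assumes n: "1 \<le> n" and f: "in_vars {2..n} f"
    and inv: "\<And>g. triangular n 2 g \<Longrightarrow> subst (Tri n 2 g) f = f"
  shows "elem 1 f \<in> center_U n"
proof -
  have U: "elem 1 f \<in> U n" by (rule elem_in_U) (use n f in \<open>auto simp: numeral_2_eq_2\<close>)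
  have "comp_end (elem 1 f) \<psi> = comp_end \<psi> (elem 1 f)" if \<psi>: "\<psi> \<in> U n" for \<psi>
  proof
    fix i
    have fin: "\<And>j. fsupp (\<psi> j)" using U_fsupp[OF \<psi>] .
    obtain G where G: "triangular n 1 G" "\<forall>i\<in>{1..n}. \<psi> i = padd (pvar i) (G i)"
      using U_tails[OF \<psi>] by blast
    show "comp_end (elem 1 f) \<psi> i = comp_end \<psi> (elem 1 f) i"
    proof (cases "i = 1")
      case True
      have G1: "in_vars {2..n} (G 1)" using G(1) n by (auto simp: triangular_def numeral_2_eq_2)
      have "subst \<psi> f = subst (Tri n 2 G) f"
        by (rule subst_cong[OF f]) (use G(2) in \<open>auto simp: Tri_def\<close>)
      also have "\<dots> = f" using G(1) by (intro inv) (auto simp: triangular_def)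
      moreover have "(1::nat) \<notin> {2..n}" "\<psi> 1 = padd (pvar 1) (G 1)" using G(2) n by auto
      ultimately show ?thesis
        using True elem_commute_at[OF in_vars_fsupp[OF f] G1] fin by simp
    next
      case False
      have "in_vars (-{1}) (\<psi> i)" by (rule U_avoids_x1[OF \<psi> False])
      then show ?thesis
        using elem_commute_off[of f "-{1}" \<psi> i 1] in_vars_fsupp[OF f] False fin by simp
    qed
  qed
  then show ?thesis using U by (simp add: center_U_def)
qed

lemma center_U_iff:
  fixes \<phi> :: "nat \<Rightarrow> 'k::field fpoly"
  assumes "1 \<le> n"
  shows "\<phi> \<in> center_U n \<longleftrightarrow>
    (\<exists>f. in_vars {2..n} f \<and> (\<forall>g. triangular n 2 g \<longrightarrow> subst (Tri n 2 g) f = f) \<and> \<phi> = elem 1 f)"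
  using central_is_elem[OF _ assms] central_elem_invariant invariant_elem_central[OF assms]
  by metis

text \<open>Triangular data on x_2, ..., x_n as written in the statement (g_n a constant).\<close>
lemma triangular_from_2:
  assumes "2 \<le> n"
  shows "triangular n 2 g \<longleftrightarrow> (\<forall>i\<in>{2..n-1}. in_vars {i+1..n} (g i)) \<and> in_vars {} (g n)"
proof -
  have "{2..n} = insert n {2..n-1}" using assms by auto
  then show ?thesis by (simp add: triangular_def conj_commute)
qed

theorem theorem3:
  fixes n :: nat
  assumes "n \<ge> 3"
  shows "(center_U n :: (nat \<Rightarrow> 'k::field_char_0 fpoly) set) =
    {\<phi>. \<exists>f. in_vars {2..n} f
          \<and> (\<forall>g. ((\<forall>i\<in>{2..n-1}. in_vars {i+1..n} (g i)) \<and> in_vars {} (g n))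
                 \<longrightarrow> subst (\<lambda>i. if i \<in> {2..n} then padd (pvar i) (g i) else pvar i) f = f)
          \<and> \<phi> = (\<lambda>i. if i = 1 then padd (pvar 1) f else pvar i)}"
proof -
  have n: "1 \<le> n" "2 \<le> n" using assms by auto
  have Tri_2: "Tri n 2 g = (\<lambda>i. if i \<in> {2..n} then padd (pvar i) (g i) else pvar i)" for g
    by (simp add: Tri_def)
  have elem_1: "elem 1 f = (\<lambda>i. if i = 1 then padd (pvar 1) f else pvar i)" for f
    by (simp add: elem_def fun_eq_iff)
  show ?thesis
    unfolding set_eq_iff mem_Collect_eq center_U_iff[OF n(1)] triangular_from_2[OF n(2)] Tri_2 elem_1
    by (intro allI refl)
qed

end
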